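(* Let $N$ be an even positive integer and $\hbar=1/(2\pi N)$. For every operator $A$ that is a finite linear combination of the operators $U^jV^k$ ($j,k\in\mathbb{Z}$), and every $m\in\{0,\dots,N-1\}$, \[ [X,F^\dagger AF]\,\Phi_m^{(0,0)}=[Y,F^\dagger AF]\,\Phi_m^{(0,0)}=0. \]
   Context: On $L^2(\mathbb{R})$ with $[\widehat{x},\widehat{p}]=i\hbar$, $U=e^{2\pi i\widehat{x}}$, $V=e^{2\pi i\widehat{p}}$. $|x\rangle_x$ are position eigen-distributions and $\Phi_m^{(0,0)}=N^{-1/2}\sum_{k\in\mathbb{Z}}|m/N+k\rangle_x$. $X^s=e^{is\widehat{x}/\hbar}$, $Y^s=e^{is\widehat{p}/\hbar}$ for real $s$ (so $X=U^N$, $Y=V^N$). Projections $L,R,E_x,O_x$ are multiplication in position representation by the indicators of $[0,1/2)+\mathbb{Z}$, $[1/2,1)+\mathbb{Z}$, $[0,1)+2\mathbb{Z}$, $[1,2)+2\mathbb{Z}$; $B,T,E_p,O_p$ are the analogous projections in momentum representation onto $[0,1/2)+\mathbb{Z}$, $[1/2,1)+\mathbb{Z}$, $[0,1)+2\mathbb{Z}$, $[1,2)+2\mathbb{Z}$; all act on $\delta$-comb distributions in the natural way. $S=\exp\!\left(-\frac{i\log2}{2\hbar}(\widehat{x}\widehat{p}+\widehat{p}\widehat{x})\right)$. The propagator is $F=S(L+X^{-1}R)(E_p+Y^{-1/2}O_p)$, which the paper also writes as $(E_x+X^{-1/2}O_x)(B+Y^{-1}T)S$. *)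

theory Defs
  imports Complex_Main
begin

text \<open>
Units: hbar = 1/(2 pi N), N a positive integer.
A delta-comb distribution  sum_x c(x) |x>_x  is represented by its coefficient
function c :: real => complex.  All operators below act on coefficient functions
exactly as the corresponding operators act on such distributions:
  - multiplication by a function f(x_hat):  c |-> (y |-> f y * c y)
  - Y^s = exp(i s p_hat / hbar) is the translation psi(x) |-> psi(x+s); on
    coefficients c |-> (y |-> c (y+s))
  - S psi(x) = 2^(-1/2) psi(x/2); on coefficients c |-> (y |-> sqrt 2 * c (y/2))
  - momentum-space projections (spectral projections of p_hat onto a set Om of
    period 2): for a comb c with integer period P (c(y+P) = c y), its momentum
    representation is supported on the lattice (1/(N P)) Z; there the indicator
    of Om is periodic in the lattice index with period K = 2 N P, hence equals the
    trigonometric polynomial sum_{r<K} g_r exp(2 pi i r p / 2), and multiplication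
    by exp(2 pi i r p/2) = exp(i s p/hbar) with s = r/(2N) is Y^s.
\<close>

type_synonym comb = "real \<Rightarrow> complex"

definition mulop :: "(real \<Rightarrow> complex) \<Rightarrow> comb \<Rightarrow> comb" where
  "mulop f c = (\<lambda>y. f y * c y)"

definition Xs :: "nat \<Rightarrow> real \<Rightarrow> comb \<Rightarrow> comb" where
  "Xs N s c = mulop (\<lambda>y. cis (2 * pi * real N * s * y)) c"

definition Ys :: "real \<Rightarrow> comb \<Rightarrow> comb" where
  "Ys s c = (\<lambda>y. c (y + s))"

definition Uop :: "int \<Rightarrow> comb \<Rightarrow> comb" where
  "Uop j c = mulop (\<lambda>y. cis (2 * pi * real_of_int j * y)) c"

text \<open>V^k = exp(2 pi i k p_hat) = Y^(2 pi hbar k) = Y^(k/N).\<close>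
definition Vop :: "nat \<Rightarrow> int \<Rightarrow> comb \<Rightarrow> comb" where
  "Vop N k c = Ys (real_of_int k / real N) c"

definition Xop :: "nat \<Rightarrow> comb \<Rightarrow> comb" where "Xop N = Xs N 1"
definition Yop :: "comb \<Rightarrow> comb" where "Yop = Ys 1"

definition indop :: "real set \<Rightarrow> comb \<Rightarrow> comb" where
  "indop A c = mulop (\<lambda>y. if y \<in> A then 1 else 0) c"

definition Lset :: "real set" where "Lset = {y. frac y < 1/2}"
definition Rset :: "real set" where "Rset = {y. 1/2 \<le> frac y}"
definition Eset :: "real set" where "Eset = {y. frac (y/2) < 1/2}"
definition Oset :: "real set" where "Oset = {y. 1/2 \<le> frac (y/2)}"

definition Lop :: "comb \<Rightarrow> comb" where "Lop = indop Lset"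
definition Rop :: "comb \<Rightarrow> comb" where "Rop = indop Rset"
definition Exop :: "comb \<Rightarrow> comb" where "Exop = indop Eset"
definition Oxop :: "comb \<Rightarrow> comb" where "Oxop = indop Oset"

definition cadd :: "comb \<Rightarrow> comb \<Rightarrow> comb" where
  "cadd c d = (\<lambda>y. c y + d y)"

definition comb_period :: "comb \<Rightarrow> nat" where
  "comb_period c = (LEAST P. 0 < P \<and> (\<forall>y. c (y + real P) = c y))"

text \<open>Spectral projection of p_hat onto Om (Om assumed 2-periodic), on integer-periodic combs.\<close>
definition momproj :: "nat \<Rightarrow> real set \<Rightarrow> comb \<Rightarrow> comb" where
  "momproj N Om c =
    (let P = comb_period c; K = 2 * N * P;
         g = (\<lambda>r::nat. (1 / of_nat K) *
               (\<Sum>l<K. (if real l / (real N * real P) \<in> Om then 1 else 0)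
                        * cis (- 2 * pi * real r * real l / real K)))
     in (\<lambda>y. \<Sum>r<K. g r * Ys (real r / (2 * real N)) c y))"

definition Bop :: "nat \<Rightarrow> comb \<Rightarrow> comb" where "Bop N = momproj N Lset"
definition Top :: "nat \<Rightarrow> comb \<Rightarrow> comb" where "Top N = momproj N Rset"
definition Epop :: "nat \<Rightarrow> comb \<Rightarrow> comb" where "Epop N = momproj N Eset"
definition Opop :: "nat \<Rightarrow> comb \<Rightarrow> comb" where "Opop N = momproj N Oset"

text \<open>S = exp(-(i log 2/(2 hbar))(xp+px)): psi(x) |-> 2^(-1/2) psi(x/2).\<close>
definition Sop :: "comb \<Rightarrow> comb" where "Sop c = (\<lambda>y. complex_of_real (sqrt 2) * c (y / 2))"
definition Sinv :: "comb \<Rightarrow> comb" where "Sinv c = (\<lambda>y. c (2 * y) / complex_of_real (sqrt 2))"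

definition Fop :: "nat \<Rightarrow> comb \<Rightarrow> comb" where
  "Fop N c = (let d = cadd (Epop N c) (Ys (-1/2) (Opop N c))
              in Sop (cadd (Lop d) (Xs N (-1) (Rop d))))"

definition Fdag :: "nat \<Rightarrow> comb \<Rightarrow> comb" where
  "Fdag N c = (let d = Sinv c; e = cadd (Lop d) (Rop (Xop N d))
               in cadd (Epop N e) (Opop N (Ys (1/2) e)))"

definition Aop :: "nat \<Rightarrow> (int \<times> int \<Rightarrow> complex) \<Rightarrow> comb \<Rightarrow> comb" where
  "Aop N a c = (\<lambda>y. \<Sum>jk\<in>{jk. a jk \<noteq> 0}. a jk * Uop (fst jk) (Vop N (snd jk) c) y)"

definition Phi :: "nat \<Rightarrow> nat \<Rightarrow> comb" where
  "Phi N m = (\<lambda>y. if (\<exists>k::int. y = real m / real N + real_of_int k)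
                   then complex_of_real (1 / sqrt (real N)) else 0)"

definition commutator_on :: "(comb \<Rightarrow> comb) \<Rightarrow> (comb \<Rightarrow> comb) \<Rightarrow> comb \<Rightarrow> comb" where
  "commutator_on P Q v = (\<lambda>y. P (Q v) y - Q (P v) y)"

end

theory Submission
  imports Defs
begin

text \<open>
  Call a comb XY-invariant if it is fixed by both X and Y, i.e. it is 1-periodic and supported on
  (1/N)\<int>. Every \<open>\<Phi>\<^sub>m\<close> is XY-invariant, and both commutators vanish on an XY-invariant
  vector as soon as \<open>F\<^sup>\<dagger>AF\<close> maps XY-invariant combs to XY-invariant combs. The monomials
  \<open>U\<^sup>jV\<^sup>k\<close> commute with X and Y. For F the point is that the shifts \<open>Y\<^sup>r\<^sup>/\<^sup>2\<^sup>N\<close> occurring in the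
  momentum projections commute with X up to the sign \<open>(-1)\<^sup>r\<close>, which gives
  \<open>E\<^sub>pX = XO\<^sub>p\<close> and \<open>O\<^sub>pX = XE\<^sub>p\<close> on 1-periodic combs, while \<open>Y\<^sup>1\<^sup>/\<^sup>2\<close> commutes with X because N is even.
  Hence for XY-invariant c the comb \<open>d = (E\<^sub>p + Y\<^sup>-\<^sup>1\<^sup>/\<^sup>2O\<^sub>p)c\<close> is twisted, \<open>Y\<^sup>1\<^sup>/\<^sup>2d = Xd\<close>;
  \<open>L + X\<^sup>-\<^sup>1R\<close> turns a twisted comb into a 1/2-periodic one, and S maps 1/2-periodic combs
  fixed by \<open>X\<^sup>2\<close> to XY-invariant ones. \<open>F\<^sup>\<dagger>\<close> performs the same steps in reverse order.
\<close>

definition Xfun :: "nat \<Rightarrow> real \<Rightarrow> complex" where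
  "Xfun N y = cis (2 * pi * real N * y)"

lemma Xfun_nonzero [simp]: "Xfun N y \<noteq> 0"
  unfolding Xfun_def by simp

lemma Xop_apply: "Xop N c y = Xfun N y * c y"
  unfolding Xop_def Xs_def mulop_def Xfun_def by simp

lemma Xs_minus_one_apply: "Xs N (-1) c y = inverse (Xfun N y) * c y"
  unfolding Xs_def mulop_def Xfun_def by simp

lemma Xfun_add: "Xfun N (y + t) = Xfun N y * Xfun N t"
  unfolding Xfun_def by (simp add: cis_mult distrib_left)

lemma Xfun_of_int [simp]: "Xfun N (of_int k) = 1"
proof -
  have "2 * pi * real N * of_int k = 2 * pi * of_int (int N * k)" by simp
  then show ?thesis unfolding Xfun_def by (simp only: cis_multiple_2pi Ints_of_int)
qed

lemma Xfun_one [simp]: "Xfun N 1 = 1"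
  using Xfun_of_int[of N 1] by simp

lemma Xfun_half: "even N \<Longrightarrow> Xfun N (1/2) = 1"
proof -
  assume "even N"
  then obtain k where "N = 2 * k" by blast
  then have "2 * pi * real N * (1/2) = 2 * pi * of_int (int k)" by simp
  then show ?thesis unfolding Xfun_def by (simp only: cis_multiple_2pi Ints_of_int)
qed

lemma Xfun_int_div: "0 < N \<Longrightarrow> Xfun N (of_int k / real N) = 1"
proof -
  assume "0 < N"
  then have "2 * pi * real N * (of_int k / real N) = 2 * pi * of_int k" by simp
  then show ?thesis unfolding Xfun_def by (simp only: cis_multiple_2pi Ints_of_int)
qed

lemma Xfun_nat_div_2N: "0 < N \<Longrightarrow> Xfun N (real r / (2 * real N)) = (-1) ^ r"
proof -
  assume "0 < N"
  then have "2 * pi * real N * (real r / (2 * real N)) = real r * pi" by simp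
  then show ?thesis unfolding Xfun_def by (simp only: DeMoivre[symmetric] cis_pi)
qed

lemma Xfun_double: "Xfun N (2 * y) = (Xfun N y)\<^sup>2"
  unfolding Xfun_def DeMoivre by (simp add: mult_ac)

definition Y_invariant :: "comb \<Rightarrow> bool" where
  "Y_invariant c \<longleftrightarrow> (\<forall>y. c (y + 1) = c y)"

definition X_invariant :: "nat \<Rightarrow> comb \<Rightarrow> bool" where
  "X_invariant N c \<longleftrightarrow> (\<forall>y. Xfun N y * c y = c y)"

definition X2_invariant :: "nat \<Rightarrow> comb \<Rightarrow> bool" where
  "X2_invariant N c \<longleftrightarrow> (\<forall>y. (Xfun N y)\<^sup>2 * c y = c y)"

definition XY_invariant :: "nat \<Rightarrow> comb \<Rightarrow> bool" where
  "XY_invariant N c \<longleftrightarrow> X_invariant N c \<and> Y_invariant c"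

lemma Y_invariant_iff_Yop: "Y_invariant c \<longleftrightarrow> Yop c = c"
  unfolding Y_invariant_def Yop_def Ys_def fun_eq_iff ..

lemma X_invariant_iff_Xop: "X_invariant N c \<longleftrightarrow> Xop N c = c"
  unfolding X_invariant_def fun_eq_iff Xop_apply ..

lemma Y_invariant_Xop: "Y_invariant c \<Longrightarrow> Y_invariant (Xop N c)"
  unfolding Y_invariant_def Xop_apply by (simp add: Xfun_add)

lemma X2_invariant_cadd: "X2_invariant N c \<Longrightarrow> X2_invariant N d \<Longrightarrow> X2_invariant N (cadd c d)"
  unfolding X2_invariant_def cadd_def by (metis distrib_left)

lemma X2_invariant_if_X_invariant: "X_invariant N c \<Longrightarrow> X2_invariant N c"
  unfolding X_invariant_def X2_invariant_def power2_eq_square by (metis mult.assoc)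

lemma Xfun_sq_add_half_int: "(Xfun N (y + of_int k / 2))\<^sup>2 = (Xfun N y)\<^sup>2"
proof -
  have "2 * (y + of_int k / 2) = 2 * y + of_int k" by simp
  then show ?thesis by (metis Xfun_double Xfun_add Xfun_of_int mult_1_right)
qed

lemma X2_invariant_Ys_minus_half: "X2_invariant N c \<Longrightarrow> X2_invariant N (Ys (-1/2) c)"
  using Xfun_sq_add_half_int[of N _ "-1"] unfolding X2_invariant_def Ys_def by (simp, metis)

definition momproj_coeff :: "nat \<Rightarrow> real set \<Rightarrow> nat \<Rightarrow> complex" where
  "momproj_coeff N Om r = (1 / of_nat (2 * N)) *
     (\<Sum>l<2 * N. (if real l / real N \<in> Om then 1 else 0) * cis (- 2 * pi * real r * real l / real (2 * N)))"

lemma comb_period_Y_invariant: "Y_invariant c \<Longrightarrow> comb_period c = 1"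
  unfolding comb_period_def Y_invariant_def by (rule Least_equality) auto

lemma momproj_Y_invariant:
  "Y_invariant c \<Longrightarrow> momproj N Om c = (\<lambda>y. \<Sum>r<2 * N. momproj_coeff N Om r * c (y + real r / (2 * real N)))"
  unfolding momproj_def comb_period_Y_invariant momproj_coeff_def Ys_def Let_def by simp

lemma lattice_point_in_Eset_iff: "l < 2 * N \<Longrightarrow> real l / real N \<in> Eset \<longleftrightarrow> l < N"
proof -
  assume l: "l < 2 * N"
  have "frac (real l / real N / 2) = real l / real N / 2"
    using l by (subst frac_eq) (auto simp: field_simps)
  then show ?thesis using l unfolding Eset_def by (auto simp: field_simps)
qed

lemma Oset_eq_Compl_Eset: "Oset = - Eset"
  unfolding Oset_def Eset_def by auto

lemma sum_lessThan_double:
  fixes F :: "nat \<Rightarrow> 'a::comm_monoid_add"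
  shows "(\<Sum>l<2 * n. F l) = (\<Sum>l<n. F l) + (\<Sum>l<n. F (l + n))"
  by (simp add: mult_2 sum.atLeastLessThan_concat[of 0 n "n + n", symmetric] lessThan_atLeast0
      sum.shift_bounds_nat_ivl[symmetric])

lemma momproj_coeff_Oset:
  assumes "0 < N"
  shows "momproj_coeff N Oset r = (-1) ^ r * momproj_coeff N Eset r"
proof -
  define phi where "phi l = cis (- 2 * pi * real r * real l / real (2 * N))" for l
  have phi_shift: "phi (l + N) = (-1) ^ r * phi l" for l
  proof -
    have "- 2 * pi * real r * real (l + N) / real (2 * N)
        = - 2 * pi * real r * real l / real (2 * N) + - (real r * pi)"
      using assms by (simp add: field_simps)
    then have "phi (l + N) = phi l * inverse (cis (real r * pi))"
      unfolding phi_def by (simp only: cis_mult[symmetric] cis_inverse)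
    also have "inverse (cis (real r * pi)) = (-1) ^ r"
      by (simp add: DeMoivre[symmetric] power_inverse[symmetric])
    finally show ?thesis by (simp add: mult.commute)
  qed
  have E: "momproj_coeff N Eset r = (1 / of_nat (2 * N)) * (\<Sum>l<2 * N. (if l < N then phi l else 0))"
    unfolding momproj_coeff_def phi_def
    by (intro arg_cong2[where f = "(*)"] refl sum.cong) (auto simp: lattice_point_in_Eset_iff)
  have O: "momproj_coeff N Oset r = (1 / of_nat (2 * N)) * (\<Sum>l<2 * N. (if l < N then 0 else phi l))"
    unfolding momproj_coeff_def phi_def
    by (intro arg_cong2[where f = "(*)"] refl sum.cong) (auto simp: lattice_point_in_Eset_iff Oset_eq_Compl_Eset)
  show ?thesis
    unfolding E O by (simp add: sum_lessThan_double phi_shift sum_distrib_left[symmetric])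
qed

lemma Y_invariant_momproj:
  assumes "Y_invariant c" shows "Y_invariant (momproj N Om c)"
  unfolding momproj_Y_invariant[OF assms] Y_invariant_def
proof (intro allI sum.cong refl arg_cong2[where f = "(*)"])
  show "c (y + 1 + t) = c (y + t)" for y t
    using assms unfolding Y_invariant_def by (metis add.commute add.left_commute)
qed

lemma X2_invariant_momproj:
  assumes "0 < N" "Y_invariant c" "X2_invariant N c"
  shows "X2_invariant N (momproj N Om c)"
  unfolding momproj_Y_invariant[OF assms(2)] X2_invariant_def sum_distrib_left
proof (intro allI sum.cong refl)
  fix y r
  have "(Xfun N (y + real r / (2 * real N)))\<^sup>2 = (Xfun N y)\<^sup>2"
    using assms(1) by (simp add: Xfun_add Xfun_nat_div_2N power_mult_distrib flip: power_mult)
  then show "(Xfun N y)\<^sup>2 * (momproj_coeff N Om r * c (y + real r / (2 * real N)))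
    = momproj_coeff N Om r * c (y + real r / (2 * real N))"
    using assms(3) unfolding X2_invariant_def by (metis mult.left_commute)
qed

lemma momproj_Xop:
  assumes "0 < N" "Y_invariant c"
  shows "momproj N Eset (Xop N c) = Xop N (momproj N Oset c)"
    and "momproj N Oset (Xop N c) = Xop N (momproj N Eset c)"
proof -
  have swap: "momproj_coeff N Eset r * (Xfun N (y + real r / (2 * real N)) * c (y + real r / (2 * real N)))
      = Xfun N y * (momproj_coeff N Oset r * c (y + real r / (2 * real N)))"
    "momproj_coeff N Oset r * (Xfun N (y + real r / (2 * real N)) * c (y + real r / (2 * real N)))
      = Xfun N y * (momproj_coeff N Eset r * c (y + real r / (2 * real N)))" for y r
  proof -
    have sign: "((-1::complex) ^ r) * (-1) ^ r = 1"
      by (simp flip: power_mult_distrib)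
    show "momproj_coeff N Eset r * (Xfun N (y + real r / (2 * real N)) * c (y + real r / (2 * real N)))
      = Xfun N y * (momproj_coeff N Oset r * c (y + real r / (2 * real N)))"
      unfolding Xfun_add Xfun_nat_div_2N[OF assms(1)] momproj_coeff_Oset[OF assms(1)] by (simp add: mult_ac)
    show "momproj_coeff N Oset r * (Xfun N (y + real r / (2 * real N)) * c (y + real r / (2 * real N)))
      = Xfun N y * (momproj_coeff N Eset r * c (y + real r / (2 * real N)))"
      unfolding Xfun_add Xfun_nat_div_2N[OF assms(1)] momproj_coeff_Oset[OF assms(1)]
      by (simp add: mult.assoc mult.left_commute[of "(-1) ^ r"] sign)
  qed
  show "momproj N Eset (Xop N c) = Xop N (momproj N Oset c)"
       "momproj N Oset (Xop N c) = Xop N (momproj N Eset c)"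
    unfolding momproj_Y_invariant[OF assms(2)] momproj_Y_invariant[OF Y_invariant_Xop[OF assms(2)]]
      fun_eq_iff Xop_apply sum_distrib_left
    by (intro allI sum.cong refl swap(1), intro allI sum.cong refl swap(2))
qed

lemma Rset_eq_Compl_Lset: "Rset = - Lset"
  unfolding Rset_def Lset_def by auto

lemma add_half_in_Lset_iff: "z + 1/2 \<in> Lset \<longleftrightarrow> z \<notin> Lset"
proof -
  have "frac (1/2 :: real) = 1/2" by (simp add: frac_eq)
  then show ?thesis
    using frac_lt_1[of z] unfolding Lset_def by (simp add: frac_add not_less)
qed

lemma add_one_in_Lset_iff: "z + 1 \<in> Lset \<longleftrightarrow> z \<in> Lset"
  unfolding Lset_def by (simp add: frac_1_eq)

lemma cadd_Lop_Rop: "cadd (Lop c) (Rop d) z = (if z \<in> Lset then c z else d z)"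
  unfolding cadd_def Lop_def Rop_def indop_def mulop_def Rset_eq_Compl_Lset by simp

lemma Epop_Opop_twist:
  assumes "0 < N" "even N" "XY_invariant N c"
  defines "d \<equiv> cadd (Epop N c) (Ys (-1/2) (Opop N c))"
  shows "Ys (1/2) d = Xop N d" and "X2_invariant N d"
proof -
  have Xc: "Xop N c = c" and Yc: "Y_invariant c"
    using assms(3) unfolding XY_invariant_def X_invariant_iff_Xop by auto
  have XE: "Xop N (Epop N c) = Opop N c" and XO: "Xop N (Opop N c) = Epop N c"
    using momproj_Xop[OF assms(1) Yc] unfolding Epop_def Opop_def Xc by simp_all
  have "Epop N c (y + 1/2) = Xfun N y * Opop N c (y - 1/2)" for y
  proof -
    have "Xfun N y * Opop N c (y - 1/2) = Epop N c (y - 1/2)"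
      using fun_cong[OF XO, of "y - 1/2"] Xfun_add[of N "y - 1/2" "1/2"] Xfun_half[OF assms(2)]
      by (simp add: Xop_apply)
    also have "\<dots> = Epop N c (y - 1/2 + 1)"
      using Y_invariant_momproj[OF Yc] unfolding Epop_def Y_invariant_def by (simp only:)
    also have "y - 1/2 + 1 = y + 1/2" by simp
    finally show ?thesis by simp
  qed
  then show "Ys (1/2) d = Xop N d"
    using fun_cong[OF XE] unfolding d_def cadd_def Ys_def fun_eq_iff Xop_apply
    by (simp add: distrib_left)
  show "X2_invariant N d"
    unfolding d_def Epop_def Opop_def
    by (intro X2_invariant_cadd X2_invariant_Ys_minus_half X2_invariant_momproj Y_invariant_momproj
        assms(1) Yc X2_invariant_if_X_invariant) (use assms(3) XY_invariant_def in blast)+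
qed

lemma Lop_Rop_Xinv_untwist:
  assumes "even N" "Ys (1/2) d = Xop N d" "X2_invariant N d"
  defines "f \<equiv> cadd (Lop d) (Xs N (-1) (Rop d))"
  shows "Ys (1/2) f = f" and "X2_invariant N f"
proof -
  have fz: "f z = (if z \<in> Lset then d z else inverse (Xfun N z) * d z)" for z
    unfolding f_def cadd_def Lop_def Rop_def indop_def Rset_eq_Compl_Lset
    by (simp add: Xs_minus_one_apply mulop_def)
  have dz: "d (z + 1/2) = Xfun N z * d z" for z
    using fun_cong[OF assms(2), of z] by (simp add: Ys_def Xop_apply)
  have Xz: "Xfun N (z + 1/2) = Xfun N z" for z
    by (simp add: Xfun_add Xfun_half[OF assms(1)])
  have d2: "(Xfun N z)\<^sup>2 * d z = d z" for z
    using assms(3) unfolding X2_invariant_def by blast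
  show "Ys (1/2) f = f"
  proof
    fix z
    show "Ys (1/2) f z = f z"
    proof (cases "z \<in> Lset")
      case True
      then show ?thesis by (simp add: Ys_def fz add_half_in_Lset_iff dz Xz)
    next
      case False
      then have "f (z + 1/2) = inverse (Xfun N z) * ((Xfun N z)\<^sup>2 * d z)"
        by (simp add: fz add_half_in_Lset_iff dz power2_eq_square)
      then show ?thesis using False by (simp add: Ys_def fz d2)
    qed
  qed
  show "X2_invariant N f"
    using d2 unfolding X2_invariant_def fz by (simp add: mult.left_commute)
qed

lemma XY_invariant_Sop:
  assumes "Ys (1/2) f = f" "X2_invariant N f"
  shows "XY_invariant N (Sop f)"
proof -
  have "Y_invariant (Sop f)"
    using fun_cong[OF assms(1)] unfolding Y_invariant_def Sop_def Ys_def by (simp add: add_divide_distrib)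
  moreover have "X_invariant N (Sop f)"
    unfolding X_invariant_def Sop_def
  proof
    fix y
    have "Xfun N y * f (y / 2) = (Xfun N (y / 2))\<^sup>2 * f (y / 2)"
      using Xfun_double[of N "y / 2"] by simp
    also have "\<dots> = f (y / 2)"
      using assms(2) unfolding X2_invariant_def by blast
    finally show "Xfun N y * (complex_of_real (sqrt 2) * f (y / 2)) = complex_of_real (sqrt 2) * f (y / 2)"
      by (simp add: mult.left_commute)
  qed
  ultimately show ?thesis unfolding XY_invariant_def by blast
qed

lemma XY_invariant_Fop:
  assumes "0 < N" "even N" "XY_invariant N c"
  shows "XY_invariant N (Fop N c)"
  using Epop_Opop_twist[OF assms] unfolding Fop_def Let_def
  by (intro XY_invariant_Sop Lop_Rop_Xinv_untwist assms(2)) auto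

lemma Sinv_half_periodic:
  assumes "XY_invariant N h"
  shows "Ys (1/2) (Sinv h) = Sinv h" and "X2_invariant N (Sinv h)"
proof -
  have "h (2 * y + 1) = h (2 * y)" and "Xfun N (2 * y) * h (2 * y) = h (2 * y)" for y
    using assms unfolding XY_invariant_def X_invariant_def Y_invariant_def by blast+
  then show "Ys (1/2) (Sinv h) = Sinv h" and "X2_invariant N (Sinv h)"
    unfolding Ys_def Sinv_def X2_invariant_def fun_eq_iff
    by (simp_all add: distrib_left flip: Xfun_double)
qed

lemma Lop_Rop_X_twist:
  assumes "even N" "Ys (1/2) s = s" "X2_invariant N s"
  defines "e \<equiv> cadd (Lop s) (Rop (Xop N s))"
  shows "Y_invariant e" and "X2_invariant N e" and "Ys (1/2) e = Xop N e"
proof -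
  have ez: "e z = (if z \<in> Lset then s z else Xfun N z * s z)" for z
    unfolding e_def cadd_Lop_Rop Xop_apply ..
  have sz: "s (z + 1/2) = s z" for z
    using fun_cong[OF assms(2), of z] by (simp add: Ys_def)
  have Xz: "Xfun N (z + 1/2) = Xfun N z" for z
    by (simp add: Xfun_add Xfun_half[OF assms(1)])
  have s2: "(Xfun N z)\<^sup>2 * s z = s z" for z
    using assms(3) unfolding X2_invariant_def by blast
  have "s (z + 1) = s z" for z
    using sz[of z] sz[of "z + 1/2"] by (simp add: add.assoc)
  then show "Y_invariant e"
    unfolding Y_invariant_def ez by (simp add: add_one_in_Lset_iff Xfun_add)
  show "X2_invariant N e"
    using s2 unfolding X2_invariant_def ez by (simp add: mult.left_commute)
  show "Ys (1/2) e = Xop N e"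
    using s2 by (auto simp: fun_eq_iff Ys_def Xop_apply ez add_half_in_Lset_iff sz Xz power2_eq_square)
qed

lemma XY_invariant_cadd_Xop:
  assumes "Y_invariant g" "X2_invariant N g"
  shows "XY_invariant N (cadd g (Xop N g))"
  using assms unfolding XY_invariant_def X_invariant_def X2_invariant_def Y_invariant_def cadd_def Xop_apply
  by (simp add: Xfun_add distrib_left power2_eq_square mult.assoc)

lemma XY_invariant_Fdag:
  assumes "0 < N" "even N" "XY_invariant N h"
  shows "XY_invariant N (Fdag N h)"
proof -
  define e where "e = cadd (Lop (Sinv h)) (Rop (Xop N (Sinv h)))"
  have e: "Y_invariant e" "X2_invariant N e" "Ys (1/2) e = Xop N e"
    unfolding e_def using Lop_Rop_X_twist[OF assms(2) Sinv_half_periodic[OF assms(3)]] by auto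
  have "Fdag N h = cadd (Epop N e) (Xop N (Epop N e))"
    unfolding Fdag_def e_def[symmetric] Let_def e(3) Epop_def Opop_def momproj_Xop(2)[OF assms(1) e(1)] ..
  then show ?thesis
    unfolding Epop_def by (simp add: XY_invariant_cadd_Xop Y_invariant_momproj X2_invariant_momproj assms(1) e)
qed

lemma XY_invariant_Uop_Vop:
  assumes "0 < N" "XY_invariant N c"
  shows "XY_invariant N (Uop j (Vop N k c))"
proof -
  have U: "cis (2 * pi * of_int j * (y + 1)) = cis (2 * pi * of_int j * y)" for y
  proof -
    have "2 * pi * of_int j * (y + 1) = 2 * pi * of_int j * y + 2 * pi * of_int j"
      by (simp add: distrib_left)
    then show ?thesis by (simp only: cis_mult[symmetric] cis_multiple_2pi Ints_of_int mult_1_right)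
  qed
  have "c (y + 1 + t) = c (y + t)" and "Xfun N y * c (y + of_int k / real N) = c (y + of_int k / real N)"
    for y t
    using assms(2) Xfun_add[of N y "of_int k / real N"] Xfun_int_div[OF assms(1), of k]
    unfolding XY_invariant_def X_invariant_def Y_invariant_def by (metis add.commute add.left_commute mult_1_right)+
  then show ?thesis
    unfolding XY_invariant_def X_invariant_def Y_invariant_def Uop_def Vop_def Ys_def mulop_def U
    by (simp add: mult.left_commute)
qed

lemma XY_invariant_sum:
  assumes "\<And>i. i \<in> I \<Longrightarrow> XY_invariant N (f i)"
  shows "XY_invariant N (\<lambda>y. \<Sum>i\<in>I. a i * f i y)"
proof -
  have "Xfun N y * f i y = f i y" and "f i (y + 1) = f i y" if "i \<in> I" for i y
    using assms[OF that] unfolding XY_invariant_def X_invariant_def Y_invariant_def by blast+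
  then show ?thesis
    unfolding XY_invariant_def X_invariant_def Y_invariant_def sum_distrib_left
    by (auto simp: mult.left_commute intro!: sum.cong)
qed

lemma XY_invariant_Aop:
  assumes "0 < N" "XY_invariant N c"
  shows "XY_invariant N (Aop N a c)"
  unfolding Aop_def by (intro XY_invariant_sum XY_invariant_Uop_Vop assms)

lemma XY_invariant_Phi:
  assumes "0 < N"
  shows "XY_invariant N (Phi N m)"
proof -
  define Z where "Z = {y. \<exists>k::int. y = real m / real N + of_int k}"
  have Phi: "Phi N m = (\<lambda>y. if y \<in> Z then complex_of_real (1 / sqrt (real N)) else 0)"
    unfolding Phi_def Z_def by simp
  have "y + 1 \<in> Z \<longleftrightarrow> y \<in> Z" for y
  proof
    assume "y + 1 \<in> Z"
    then obtain k :: int where "y + 1 = real m / real N + of_int k" unfolding Z_def by blast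
    then have "y = real m / real N + of_int (k - 1)" by simp
    then show "y \<in> Z" unfolding Z_def by blast
  next
    assume "y \<in> Z"
    then obtain k :: int where "y = real m / real N + of_int k" unfolding Z_def by blast
    then have "y + 1 = real m / real N + of_int (k + 1)" by simp
    then show "y + 1 \<in> Z" unfolding Z_def by blast
  qed
  moreover have "Xfun N y = 1" if "y \<in> Z" for y
  proof -
    obtain k :: int where "y = real m / real N + of_int k" using \<open>y \<in> Z\<close> unfolding Z_def by blast
    then have "y = of_int (int m + int N * k) / real N" using assms by (simp add: field_simps)
    then show ?thesis using Xfun_int_div[OF assms, of "int m + int N * k"] by (simp only:)
  qed
  ultimately show ?thesis
    unfolding XY_invariant_def X_invariant_def Y_invariant_def Phi by simp
qed

lemma commutator_on_XY_invariant:
  assumes "\<And>c. XY_invariant N c \<Longrightarrow> XY_invariant N (Q c)" "XY_invariant N v"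
  shows "commutator_on (Xop N) Q v = (\<lambda>y. 0)" and "commutator_on Yop Q v = (\<lambda>y. 0)"
  using assms(2) assms(1)[OF assms(2)]
  unfolding commutator_on_def XY_invariant_def X_invariant_iff_Xop Y_invariant_iff_Yop by simp_all

theorem mainTheorem5:
  fixes N m :: nat and a :: "int \<times> int \<Rightarrow> complex"
  assumes "0 < N" and "even N"
    and "finite {jk. a jk \<noteq> 0}"
    and "m < N"
  shows "commutator_on (Xop N) (\<lambda>v. Fdag N (Aop N a (Fop N v))) (Phi N m) = (\<lambda>y. 0)
       \<and> commutator_on Yop (\<lambda>v. Fdag N (Aop N a (Fop N v))) (Phi N m) = (\<lambda>y. 0)"
proof -
  have "XY_invariant N (Fdag N (Aop N a (Fop N c)))" if "XY_invariant N c" for c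
    using assms(1,2) that by (intro XY_invariant_Fdag XY_invariant_Aop XY_invariant_Fop)
  from commutator_on_XY_invariant[OF this XY_invariant_Phi[OF assms(1)]] show ?thesis ..
qed

end
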